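(* Let $G$ and $H$ be connected graphs of order at least two such that neither $G$ nor $H$ is a complete graph. If $\textnormal{diam}(G\diamond H)=2$, then $O_{\rm SR}(G\diamond H)=\mathcal{B}$.
   Context: All graphs are finite, simple and undirected; $\overline{X}$ denotes the complement of $X$; $\textnormal{diam}$ denotes diameter. The modular product $G\diamond H$ has vertex set $V(G)\times V(H)$, and $(g,h)$, $(g',h')$ are adjacent iff one of the following holds: ($g=g'$ and $hh'\in E(H)$), or ($h=h'$ and $gg'\in E(G)$), or ($gg'\in E(G)$ and $hh'\in E(H)$), or ($gg'\in E(\overline{G})$ and $hh'\in E(\overline{H})$). A set $S\subseteq V(X)$ is a strong resolving set of a connected graph $X$ if for all distinct $x,y\in V(X)$ there exists $z\in S$ such that $x$ lies on a $y$–$z$ geodesic or $y$ lies on an $x$–$z$ geodesic. The Maker–Breaker strong resolving game on $X$: Maker and Breaker alternately select a not-yet-chosen vertex of $X$; Maker wins if the vertices he selects contain a strong resolving set of $X$, Breaker wins otherwise. In the M-game Maker moves first, in the B-game Breaker moves first. $O_{\rm SR}(X)=\mathcal{M}$ if Maker has a winning strategy in both games, $\mathcal{B}$ if Breaker has a winning strategy in both, and $\mathcal{N}$ if the first player has a winning strategy in each. *)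

theory Defs
  imports Main "HOL-Library.Extended_Nat"
begin

definition simple_graph :: "'a set \<Rightarrow> ('a \<Rightarrow> 'a \<Rightarrow> bool) \<Rightarrow> bool" where
  "simple_graph V E \<longleftrightarrow> finite V \<and> (\<forall>x y. E x y \<longrightarrow> x \<in> V \<and> y \<in> V)
     \<and> (\<forall>x y. E x y \<longrightarrow> E y x) \<and> (\<forall>x. \<not> E x x)"

definition gwalk :: "'a set \<Rightarrow> ('a \<Rightarrow> 'a \<Rightarrow> bool) \<Rightarrow> 'a list \<Rightarrow> bool" where
  "gwalk V E p \<longleftrightarrow> p \<noteq> [] \<and> set p \<subseteq> V \<and> (\<forall>i. Suc i < length p \<longrightarrow> E (p ! i) (p ! Suc i))"

definition gconnected :: "'a set \<Rightarrow> ('a \<Rightarrow> 'a \<Rightarrow> bool) \<Rightarrow> bool" where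
  "gconnected V E \<longleftrightarrow> V \<noteq> {} \<and>
     (\<forall>x\<in>V. \<forall>y\<in>V. \<exists>p. gwalk V E p \<and> hd p = x \<and> last p = y)"

definition complete_graph :: "'a set \<Rightarrow> ('a \<Rightarrow> 'a \<Rightarrow> bool) \<Rightarrow> bool" where
  "complete_graph V E \<longleftrightarrow> (\<forall>x\<in>V. \<forall>y\<in>V. x \<noteq> y \<longrightarrow> E x y)"

definition gdist :: "'a set \<Rightarrow> ('a \<Rightarrow> 'a \<Rightarrow> bool) \<Rightarrow> 'a \<Rightarrow> 'a \<Rightarrow> enat" where
  "gdist V E x y = (INF p \<in> {p. gwalk V E p \<and> hd p = x \<and> last p = y}. enat (length p - 1))"

definition gdiam :: "'a set \<Rightarrow> ('a \<Rightarrow> 'a \<Rightarrow> bool) \<Rightarrow> enat" where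
  "gdiam V E = (SUP x\<in>V. SUP y\<in>V. gdist V E x y)"

definition geodesic :: "'a set \<Rightarrow> ('a \<Rightarrow> 'a \<Rightarrow> bool) \<Rightarrow> 'a \<Rightarrow> 'a \<Rightarrow> 'a list \<Rightarrow> bool" where
  "geodesic V E y z p \<longleftrightarrow> gwalk V E p \<and> hd p = y \<and> last p = z
      \<and> enat (length p - 1) = gdist V E y z"

definition on_geodesic :: "'a set \<Rightarrow> ('a \<Rightarrow> 'a \<Rightarrow> bool) \<Rightarrow> 'a \<Rightarrow> 'a \<Rightarrow> 'a \<Rightarrow> bool" where
  "on_geodesic V E x y z \<longleftrightarrow> (\<exists>p. geodesic V E y z p \<and> x \<in> set p)"

definition strong_resolving_set :: "'a set \<Rightarrow> ('a \<Rightarrow> 'a \<Rightarrow> bool) \<Rightarrow> 'a set \<Rightarrow> bool" where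
  "strong_resolving_set V E S \<longleftrightarrow> S \<subseteq> V \<and>
     (\<forall>x\<in>V. \<forall>y\<in>V. x \<noteq> y \<longrightarrow>
        (\<exists>z\<in>S. on_geodesic V E x y z \<or> on_geodesic V E y x z))"

definition modprod_edge ::
  "'a set \<Rightarrow> ('a \<Rightarrow> 'a \<Rightarrow> bool) \<Rightarrow> 'b set \<Rightarrow> ('b \<Rightarrow> 'b \<Rightarrow> bool) \<Rightarrow> 'a \<times> 'b \<Rightarrow> 'a \<times> 'b \<Rightarrow> bool" where
  "modprod_edge VG EG VH EH u w \<longleftrightarrow>
     (case u of (g, h) \<Rightarrow> case w of (g', h') \<Rightarrow>
       g \<in> VG \<and> g' \<in> VG \<and> h \<in> VH \<and> h' \<in> VH \<and>
       ((g = g' \<and> EH h h') \<or> (h = h' \<and> EG g g') \<or> (EG g g' \<and> EH h h') \<or>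
        ((g \<noteq> g' \<and> \<not> EG g g') \<and> (h \<noteq> h' \<and> \<not> EH h h'))))"

text \<open>Maker--Breaker game on board X. forces X goal t P Q: the player A, who currently owns
  the set P (opponent owns Q), has a strategy guaranteeing that when the board is full
  goal P' Q' holds; t = True means A is to move.\<close>
inductive forces :: "'a set \<Rightarrow> ('a set \<Rightarrow> 'a set \<Rightarrow> bool) \<Rightarrow> bool \<Rightarrow> 'a set \<Rightarrow> 'a set \<Rightarrow> bool"
  for X goal where
  finished: "P \<union> Q = X \<Longrightarrow> goal P Q \<Longrightarrow> forces X goal t P Q"
| own_move: "v \<in> X - (P \<union> Q) \<Longrightarrow> forces X goal False (insert v P) Q \<Longrightarrow> forces X goal True P Q"
| opp_move: "P \<union> Q \<noteq> X \<Longrightarrow> (\<forall>v \<in> X - (P \<union> Q). forces X goal True P (insert v Q))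
      \<Longrightarrow> forces X goal False P Q"

definition maker_goal_SR :: "'a set \<Rightarrow> ('a \<Rightarrow> 'a \<Rightarrow> bool) \<Rightarrow> 'a set \<Rightarrow> bool" where
  "maker_goal_SR V E M \<longleftrightarrow> (\<exists>S \<subseteq> M. strong_resolving_set V E S)"

text \<open>Breaker has a winning strategy in the M-game (Maker first) and in the B-game (Breaker first).\<close>
definition breaker_wins_M_game :: "'a set \<Rightarrow> ('a \<Rightarrow> 'a \<Rightarrow> bool) \<Rightarrow> bool" where
  "breaker_wins_M_game V E \<longleftrightarrow> forces V (\<lambda>Br Mk. \<not> maker_goal_SR V E Mk) False {} {}"

definition breaker_wins_B_game :: "'a set \<Rightarrow> ('a \<Rightarrow> 'a \<Rightarrow> bool) \<Rightarrow> bool" where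
  "breaker_wins_B_game V E \<longleftrightarrow> forces V (\<lambda>Br Mk. \<not> maker_goal_SR V E Mk) True {} {}"

definition maker_wins_M_game :: "'a set \<Rightarrow> ('a \<Rightarrow> 'a \<Rightarrow> bool) \<Rightarrow> bool" where
  "maker_wins_M_game V E \<longleftrightarrow> forces V (\<lambda>Mk Br. maker_goal_SR V E Mk) True {} {}"

definition maker_wins_B_game :: "'a set \<Rightarrow> ('a \<Rightarrow> 'a \<Rightarrow> bool) \<Rightarrow> bool" where
  "maker_wins_B_game V E \<longleftrightarrow> forces V (\<lambda>Mk Br. maker_goal_SR V E Mk) False {} {}"

definition O_SR_is_B :: "'a set \<Rightarrow> ('a \<Rightarrow> 'a \<Rightarrow> bool) \<Rightarrow> bool" where
  "O_SR_is_B V E \<longleftrightarrow> breaker_wins_M_game V E \<and> breaker_wins_B_game V E"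

end

theory Submission
  imports Defs
begin

(* In a graph of diameter two, an inner vertex of a geodesic is adjacent to its first vertex,
   so a geodesic from a third vertex never passes through a nonadjacent pair: every strong
   resolving set contains one vertex of each nonadjacent pair, and Breaker wins as soon as he
   owns both ends of one. If g, g' are nonadjacent in G and h, h' adjacent in H, then
   (g,h), (g',h), (g,h'), (g',h') form a 4-cycle of nonadjacent pairs in the modular product.
   Moving first, Breaker takes a vertex of the cycle and then whichever of its two cycle
   neighbours Maker leaves free; moving second, he finds such a free fork (a path of length two)
   on the cycle after Maker's first move. *)

lemma forces_if_goal_on_completions:
  assumes "finite X" and "P \<union> Q \<subseteq> X"
    and "\<And>P' Q'. P \<subseteq> P' \<Longrightarrow> Q' \<inter> P \<subseteq> Q \<Longrightarrow> P' \<union> Q' = X \<Longrightarrow> goal P' Q'"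
  shows "forces X goal t P Q"
  using assms(2,3)
proof (induction "card (X - (P \<union> Q))" arbitrary: P Q t)
  case 0
  then have "P \<union> Q = X" using \<open>finite X\<close> by auto
  then show ?case using 0 by (auto intro: forces.finished)
next
  case (Suc n)
  have claim_own: "forces X goal t' (insert v P) Q" and claim_opp: "forces X goal t' P (insert v Q)"
    if v: "v \<in> X - (P \<union> Q)" for v t'
  proof -
    have card: "card (X - insert v (P \<union> Q)) = n"
      using Suc.hyps(2) v \<open>finite X\<close> by (simp add: Diff_insert[symmetric])
    show "forces X goal t' (insert v P) Q"
    proof (rule Suc.hyps(1))
      show "\<And>P' Q'. insert v P \<subseteq> P' \<Longrightarrow> Q' \<inter> insert v P \<subseteq> Q \<Longrightarrow> P' \<union> Q' = X \<Longrightarrow> goal P' Q'"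
        using Suc.prems(2) by blast
    qed (use card Suc.prems v in auto)
    show "forces X goal t' P (insert v Q)"
    proof (rule Suc.hyps(1))
      show "\<And>P' Q'. P \<subseteq> P' \<Longrightarrow> Q' \<inter> P \<subseteq> insert v Q \<Longrightarrow> P' \<union> Q' = X \<Longrightarrow> goal P' Q'"
        using Suc.prems(2) v by blast
    qed (use card Suc.prems v in auto)
  qed
  have "X - (P \<union> Q) \<noteq> {}" using Suc.hyps(2) by (metis card.empty nat.distinct(1))
  then obtain v where v: "v \<in> X - (P \<union> Q)" by blast
  show ?case
  proof (cases t)
    case True
    then show ?thesis using v claim_own by (auto intro: forces.own_move)
  next
    case False
    then show ?thesis using v claim_opp by (auto intro!: forces.opp_move)
  qed
qed

definition claiming_pair_wins ::
  "'a set \<Rightarrow> ('a set \<Rightarrow> 'a set \<Rightarrow> bool) \<Rightarrow> ('a \<Rightarrow> 'a \<Rightarrow> bool) \<Rightarrow> bool" where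
  "claiming_pair_wins X goal R \<longleftrightarrow>
     (\<forall>P Q x y. R x y \<longrightarrow> x \<in> P - Q \<longrightarrow> y \<in> P - Q \<longrightarrow> P \<union> Q = X \<longrightarrow> goal P Q)"

lemma forces_if_pair_claimed:
  assumes "finite X" and "P \<union> Q \<subseteq> X" and "claiming_pair_wins X goal R"
    and "R x y" and "x \<in> P - Q" and "y \<in> P - Q"
  shows "forces X goal t P Q"
  using assms(1,2)
proof (rule forces_if_goal_on_completions)
  fix P' Q' assume "P \<subseteq> P'" "Q' \<inter> P \<subseteq> Q" "P' \<union> Q' = X"
  with assms(3-6) show "goal P' Q'" unfolding claiming_pair_wins_def by blast
qed

lemma forces_first_player_fork:
  assumes "finite X" and "P \<union> Q \<subseteq> X" and "claiming_pair_wins X goal R"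
    and "R a b" and "R a d" and "distinct [a, b, d]" and "{a, b, d} \<subseteq> X - (P \<union> Q)"
  shows "forces X goal True P Q"
proof (rule forces.own_move)
  show "a \<in> X - (P \<union> Q)" using assms(7) by simp
  show "forces X goal False (insert a P) Q"
  proof (rule forces.opp_move)
    show "insert a P \<union> Q \<noteq> X" using assms(6,7) by auto
    show "\<forall>v \<in> X - (insert a P \<union> Q). forces X goal True (insert a P) (insert v Q)"
    proof
      fix v assume v: "v \<in> X - (insert a P \<union> Q)"
      obtain w where w: "R a w" "w \<noteq> a" "w \<noteq> v" "w \<in> X - (P \<union> Q)"
      proof (cases "v = b")
        case True
        then show ?thesis using that[of d] assms(5-7) by auto
      next
        case False
        then show ?thesis using that[of b] assms(4,6,7) by auto
      qed
      have "forces X goal False (insert w (insert a P)) (insert v Q)"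
        by (rule forces_if_pair_claimed[OF assms(1) _ assms(3) w(1)]) (use assms(2,7) v w in auto)
      then show "forces X goal True (insert a P) (insert v Q)"
        using v w by (intro forces.own_move[of w]) auto
    qed
  qed
qed

lemma forces_second_player_4cycle:
  assumes "finite X" and "P \<union> Q \<subseteq> X" and "claiming_pair_wins X goal R" and "symp R"
    and "R a b" and "R b c" and "R c d" and "R d a"
    and "distinct [a, b, c, d]" and "{a, b, c, d} \<subseteq> X - (P \<union> Q)"
  shows "forces X goal False P Q"
proof (rule forces.opp_move)
  show "P \<union> Q \<noteq> X" using assms(10) by auto
  have R': "R b a" "R c b" "R d c" "R a d" using assms(4-8) by (auto dest: sympD)
  show "\<forall>v \<in> X - (P \<union> Q). forces X goal True P (insert v Q)"
  proof
    fix v assume v: "v \<in> X - (P \<union> Q)"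
    have fork: "forces X goal True P (insert v Q)"
      if "R y x" "R y z" "distinct [y, x, z]" "v \<notin> {x, y, z}" "{x, y, z} \<subseteq> {a, b, c, d}" for y x z
      by (rule forces_first_player_fork[of X _ _ goal R y x z]) (use assms(1-3,10) v that in auto)
    consider "v = a" | "v = b" | "v = d" | "v \<notin> {a, b, d}" by blast
    then show "forces X goal True P (insert v Q)"
    proof cases
      case 1
      then show ?thesis using fork[of c b d] assms(7,9) R' by auto
    next
      case 2
      then show ?thesis using fork[of d c a] assms(8,9) R' by auto
    next
      case 3
      then show ?thesis using fork[of b a c] assms(6,9) R' by auto
    next
      case 4
      then show ?thesis using fork[of a b d] assms(5,9) R' by auto
    qed
  qed
qed

definition nonadjacent :: "'a set \<Rightarrow> ('a \<Rightarrow> 'a \<Rightarrow> bool) \<Rightarrow> 'a \<Rightarrow> 'a \<Rightarrow> bool" where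
  "nonadjacent V E x y \<longleftrightarrow> x \<in> V \<and> y \<in> V \<and> x \<noteq> y \<and> \<not> E x y \<and> \<not> E y x"

lemma symp_nonadjacent: "symp (nonadjacent V E)"
  by (auto simp: nonadjacent_def intro: sympI)

lemma gdist_le_gdiam: "u \<in> V \<Longrightarrow> w \<in> V \<Longrightarrow> gdist V E u w \<le> gdiam V E"
  unfolding gdiam_def by (rule SUP_upper2, assumption, rule SUP_upper)

lemma on_short_geodesic_imp_adjacent:
  assumes "on_geodesic V E x y z" and "gdist V E y z \<le> 2" and "x \<noteq> y" and "x \<noteq> z"
  shows "E y x"
proof -
  obtain p where p: "geodesic V E y z p" and "x \<in> set p"
    using assms(1) unfolding on_geodesic_def by blast
  then obtain i where i: "i < length p" "p ! i = x" by (metis in_set_conv_nth)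
  from p have walk: "gwalk V E p" and ends: "p ! 0 = y" "p ! (length p - 1) = z"
    and len: "enat (length p - 1) = gdist V E y z"
    unfolding geodesic_def gwalk_def by (auto simp: hd_conv_nth last_conv_nth)
  have "length p - 1 \<le> 2" using len assms(2) by (metis enat_ord_simps(1) numeral_eq_enat)
  moreover have "i \<noteq> 0" "i \<noteq> length p - 1" using i(2) ends assms(3,4) by metis+
  ultimately have "i = 1" "Suc 0 < length p" using i(1) by linarith+
  then show "E y x" using walk ends(1) i(2) unfolding gwalk_def by auto
qed

lemma strong_resolving_set_meets_nonadjacent:
  assumes "strong_resolving_set V E S" and "gdiam V E \<le> 2" and "nonadjacent V E x y"
  shows "x \<in> S \<or> y \<in> S"
proof (rule ccontr)
  assume "\<not> (x \<in> S \<or> y \<in> S)"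
  moreover obtain z where z: "z \<in> S" and "on_geodesic V E x y z \<or> on_geodesic V E y x z"
    using assms(1,3) unfolding strong_resolving_set_def nonadjacent_def by blast
  moreover have "gdist V E y z \<le> 2" "gdist V E x z \<le> 2"
    using gdist_le_gdiam[of _ V z E] assms z order_trans
    unfolding strong_resolving_set_def nonadjacent_def by blast+
  ultimately show False
    using on_short_geodesic_imp_adjacent assms(3) unfolding nonadjacent_def by metis
qed

lemma claiming_nonadjacent_pair_wins_SR:
  assumes "gdiam V E \<le> 2"
  shows "claiming_pair_wins V (\<lambda>Br Mk. \<not> maker_goal_SR V E Mk) (nonadjacent V E)"
  unfolding claiming_pair_wins_def maker_goal_SR_def
  using strong_resolving_set_meets_nonadjacent[OF _ assms] by blast

lemma O_SR_is_B_if_nonadjacent_4cycle: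
  assumes "finite V" and "gdiam V E \<le> 2"
    and "nonadjacent V E a b" and "nonadjacent V E b c"
    and "nonadjacent V E c d" and "nonadjacent V E d a" and "a \<noteq> c" and "b \<noteq> d"
  shows "O_SR_is_B V E"
proof -
  have board: "{a, b, c, d} \<subseteq> V - ({} \<union> {})" and "distinct [a, b, c, d]"
    using assms(3-8) unfolding nonadjacent_def by auto
  note game = assms(1) _ claiming_nonadjacent_pair_wins_SR[OF assms(2)]
  have "forces V (\<lambda>Br Mk. \<not> maker_goal_SR V E Mk) False {} {}"
    by (rule forces_second_player_4cycle[OF game symp_nonadjacent assms(3-6)])
      (use board \<open>distinct [a, b, c, d]\<close> in auto)
  moreover have "forces V (\<lambda>Br Mk. \<not> maker_goal_SR V E Mk) True {} {}"
    by (rule forces_first_player_fork[OF game assms(3) symp_nonadjacent[THEN sympD, OF assms(6)]])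
      (use board \<open>distinct [a, b, c, d]\<close> in auto)
  ultimately show ?thesis
    unfolding O_SR_is_B_def breaker_wins_M_game_def breaker_wins_B_game_def by blast
qed

lemma not_modprod_edge:
  assumes "g \<noteq> g'" and "\<not> EG g g'" and "h = h' \<or> EH h h'"
  shows "\<not> modprod_edge VG EG VH EH (g, h) (g', h')"
  using assms unfolding modprod_edge_def by auto

lemma modprod_nonadjacent_4cycle:
  assumes "simple_graph VG EG" and "simple_graph VH EH"
    and "\<not> complete_graph VG EG" and "EH h h'"
  obtains a b c d where "nonadjacent (VG \<times> VH) (modprod_edge VG EG VH EH) a b"
    and "nonadjacent (VG \<times> VH) (modprod_edge VG EG VH EH) b c"
    and "nonadjacent (VG \<times> VH) (modprod_edge VG EG VH EH) c d"
    and "nonadjacent (VG \<times> VH) (modprod_edge VG EG VH EH) d a"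
    and "a \<noteq> c" and "b \<noteq> d"
proof -
  obtain g g' where g: "g \<in> VG" "g' \<in> VG" "g \<noteq> g'" "\<not> EG g g'" "\<not> EG g' g"
    using assms(1,3) unfolding complete_graph_def simple_graph_def by blast
  have h: "h \<in> VH" "h' \<in> VH" "h \<noteq> h'" "EH h' h"
    using assms(2,4) unfolding simple_graph_def by blast+
  show thesis
  proof (rule that[of "(g, h)" "(g', h)" "(g, h')" "(g', h')"])
  qed (use g h assms(4) in \<open>auto simp: nonadjacent_def not_modprod_edge\<close>)
qed

lemma gconnected_has_edge:
  assumes "gconnected V E" and "x \<in> V" and "y \<in> V" and "x \<noteq> y"
  obtains u v where "E u v"
proof -
  obtain p where p: "gwalk V E p" "hd p = x" "last p = y"
    using assms(1-3) unfolding gconnected_def by blast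
  then have "Suc 0 < length p"
    using assms(4) by (cases p) (auto simp: gwalk_def)
  then show thesis using p(1) that unfolding gwalk_def by blast
qed

theorem mainTheorem17:
  fixes VG :: "'a set" and EG :: "'a \<Rightarrow> 'a \<Rightarrow> bool"
    and VH :: "'b set" and EH :: "'b \<Rightarrow> 'b \<Rightarrow> bool"
  assumes "simple_graph VG EG" and "simple_graph VH EH"
    and "gconnected VG EG" and "gconnected VH EH"
    and "card VG \<ge> 2" and "card VH \<ge> 2"
    and "\<not> complete_graph VG EG" and "\<not> complete_graph VH EH"
    and "gdiam (VG \<times> VH) (modprod_edge VG EG VH EH) = 2"
  shows "O_SR_is_B (VG \<times> VH) (modprod_edge VG EG VH EH)"
proof -
  obtain x y where "x \<in> VH" "y \<in> VH" "x \<noteq> y"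
    using assms(6) by (metis card_le_Suc_iff insert_iff numeral_2_eq_2 Suc_le_D)
  then obtain h h' where "EH h h'" using gconnected_has_edge[OF assms(4)] by blast
  then obtain a b c d where "nonadjacent (VG \<times> VH) (modprod_edge VG EG VH EH) a b"
    "nonadjacent (VG \<times> VH) (modprod_edge VG EG VH EH) b c"
    "nonadjacent (VG \<times> VH) (modprod_edge VG EG VH EH) c d"
    "nonadjacent (VG \<times> VH) (modprod_edge VG EG VH EH) d a" "a \<noteq> c" "b \<noteq> d"
    using modprod_nonadjacent_4cycle[OF assms(1,2,7)] by blast
  moreover have "finite (VG \<times> VH)" using assms(1,2) unfolding simple_graph_def by simp
  ultimately show ?thesis using O_SR_is_B_if_nonadjacent_4cycle assms(9) by (metis order_refl)
qed

end
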